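(* Let $r\ge 2$ and $x\ge 2$ be integers, let $G$ be a $K_r$-free graph on $x$ vertices, and let $\mathcal I$ denote the number of independent sets of $G$ (including the empty set). Then $$\log \mathcal I\;\ge\;\max\left(\frac{x^{1/r}}{2},\ \frac{\log^2 x}{18\log(2r)}\right).$$
   Context: A graph is $K_r$-free if it contains no $r$ pairwise adjacent vertices. Logarithms are base 2. *)

theory Defs
  imports "HOL-Analysis.Analysis"
begin

definition simple_graph :: "'a set \<Rightarrow> ('a \<Rightarrow> 'a \<Rightarrow> bool) \<Rightarrow> bool" where
  "simple_graph V E \<longleftrightarrow> finite V \<and> (\<forall>u v. E u v \<longrightarrow> E v u)
     \<and> (\<forall>v. \<not> E v v) \<and> (\<forall>u v. E u v \<longrightarrow> u \<in> V \<and> v \<in> V)"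

definition is_clique :: "'a set \<Rightarrow> ('a \<Rightarrow> 'a \<Rightarrow> bool) \<Rightarrow> 'a set \<Rightarrow> bool" where
  "is_clique V E C \<longleftrightarrow> C \<subseteq> V \<and> (\<forall>u\<in>C. \<forall>v\<in>C. u \<noteq> v \<longrightarrow> E u v)"

definition Kr_free :: "nat \<Rightarrow> 'a set \<Rightarrow> ('a \<Rightarrow> 'a \<Rightarrow> bool) \<Rightarrow> bool" where
  "Kr_free r V E \<longleftrightarrow> \<not> (\<exists>C. is_clique V E C \<and> finite C \<and> card C = r)"

definition is_independent :: "'a set \<Rightarrow> ('a \<Rightarrow> 'a \<Rightarrow> bool) \<Rightarrow> 'a set \<Rightarrow> bool" where
  "is_independent V E S \<longleftrightarrow> S \<subseteq> V \<and> (\<forall>u\<in>S. \<forall>v\<in>S. \<not> E u v)"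

definition num_independent_sets :: "'a set \<Rightarrow> ('a \<Rightarrow> 'a \<Rightarrow> bool) \<Rightarrow> nat" where
  "num_independent_sets V E = card {S. is_independent V E S}"

end

theory Submission
  imports Defs
begin

text \<open>Let \<open>I(U)\<close> count the independent sets inside \<open>U\<close>. An independent set either avoids a
  vertex \<open>v\<close> or is \<open>v\<close> together with an independent set of non-neighbours of \<open>v\<close>, so
  \<open>I(U) \<ge> I(U - {v}) + I(non-neighbours of v)\<close>.

  First bound: if \<open>U\<close> is \<open>K\<^sub>r\<close>-free and \<open>|U| \<ge> t^(r-1)\<close> then \<open>I(U) \<ge> 2^t\<close>. Either some vertex has
  \<open>t^(r-2)\<close> neighbours, whose \<open>K\<^sub>r\<^sub>-\<^sub>1\<close>-free neighbourhood gives the claim by induction on \<open>r\<close>, or all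
  degrees are smaller and passing \<open>t\<close> times to a non-neighbourhood doubles the count each time.
  Take \<open>t = \<lfloor>x^(1/r)\<rfloor>\<close>.

  Second bound: a \<open>K\<^sub>r\<close>-free \<open>U\<close> has a vertex with at least \<open>|U|/(r-1) - 1\<close> non-neighbours. Deleting
  such vertices one at a time, each contributes the independent sets of a large non-neighbourhood,
  and induction on \<open>h\<close> gives \<open>T^(h(h+1)/2) \<le> 2^h I(U)\<close> whenever \<open>|U| \<ge> T^h\<close>, where \<open>T = 4r\<close>.
  Choosing \<open>h = \<lfloor>log x / log T\<rfloor>\<close> yields \<open>log I \<ge> h(h+1) log T / 2 - h\<close>, which is at least
  \<open>log\<^sup>2 x / (18 log 2r)\<close>.\<close>

lemma finite_independent_sets: "finite U \<Longrightarrow> finite {S. is_independent U E S}"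
  by (rule finite_subset[of _ "Pow U"]) (auto simp: is_independent_def)

lemma num_independent_sets_mono:
  assumes "finite U" and "W \<subseteq> U"
  shows "num_independent_sets W E \<le> num_independent_sets U E"
  using assms unfolding num_independent_sets_def is_independent_def
  by (intro card_mono finite_independent_sets[unfolded is_independent_def]) blast+

lemma num_independent_sets_pos:
  assumes "finite U"
  shows "0 < num_independent_sets U E"
proof -
  have "is_independent U E {}" by (simp add: is_independent_def)
  then show ?thesis
    using finite_independent_sets[OF assms] by (auto simp: num_independent_sets_def card_gt_0_iff)
qed

lemma Kr_free_subset: "W \<subseteq> U \<Longrightarrow> Kr_free r U E \<Longrightarrow> Kr_free r W E"
  unfolding Kr_free_def is_clique_def by (metis subset_trans)

lemma Kr_free_1_imp_empty:
  assumes "Kr_free 1 U E"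
  shows "U = {}"
proof (rule ccontr)
  assume "U \<noteq> {}"
  then obtain u where "is_clique U E {u}" by (auto simp: is_clique_def)
  moreover have "finite {u}" and "card {u} = 1" by simp_all
  ultimately show False using assms unfolding Kr_free_def by blast
qed

lemma square_div_le_triangular:
  fixes l h L :: real
  assumes l: "3 \<le> l" and h: "1 \<le> h" and L: "0 \<le> L" "L < (h + 1) * l"
  shows "L\<^sup>2 / (18 * (l - 1)) \<le> h * (h + 1) * l / 2 - h"
proof -
  have "L\<^sup>2 \<le> ((h + 1) * l)\<^sup>2" using L by (intro power_mono) auto
  also have "\<dots> \<le> 2 * h * (h + 1) * l\<^sup>2"
  proof -
    have "(h + 1) * (h + 1) \<le> (2 * h) * (h + 1)" using h by (intro mult_right_mono) auto
    then have "((h + 1) * (h + 1)) * l\<^sup>2 \<le> ((2 * h) * (h + 1)) * l\<^sup>2" by (rule mult_right_mono) simp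
    then show ?thesis by (simp add: power2_eq_square algebra_simps)
  qed
  also have "\<dots> = 18 * (2 * l / 3) * (h * (h + 1) * l / 6)"
    by (simp add: power2_eq_square algebra_simps)
  also have "\<dots> \<le> 18 * (l - 1) * (h * (h + 1) * l / 2 - h)"
  proof (intro mult_mono)
    have "3 \<le> (h + 1) * l" using h l mult_mono[of 1 "h + 1" 3 l] by simp
    then have "h * 3 \<le> h * (h + 1) * l" using h by (simp add: mult.assoc mult_left_mono)
    then show "h * (h + 1) * l / 6 \<le> h * (h + 1) * l / 2 - h" by linarith
  qed (use h l in auto)
  finally show ?thesis using l by (simp add: pos_divide_le_eq mult.commute)
qed

locale undirected_graph =
  fixes E :: "'a \<Rightarrow> 'a \<Rightarrow> bool"
  assumes edge_sym: "E u v \<Longrightarrow> E v u" and no_loop: "\<not> E v v"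
begin

definition neighbours :: "'a set \<Rightarrow> 'a \<Rightarrow> 'a set" where
  "neighbours U v = {u \<in> U. E v u}"

definition non_neighbours :: "'a set \<Rightarrow> 'a \<Rightarrow> 'a set" where
  "non_neighbours U v = {u \<in> U. u \<noteq> v \<and> \<not> E v u}"

lemma card_le_num_independent_sets:
  assumes "finite U"
  shows "card U \<le> num_independent_sets U E"
proof -
  have "card U = card ((\<lambda>u. {u}) ` U)" by (simp add: card_image)
  also have "\<dots> \<le> num_independent_sets U E"
    unfolding num_independent_sets_def
    by (rule card_mono[OF finite_independent_sets[OF assms]])
       (auto simp: is_independent_def no_loop)
  finally show ?thesis .
qed

lemma Kr_free_neighbours:
  assumes v: "v \<in> U" and free: "Kr_free (Suc r) U E"
  shows "Kr_free r (neighbours U v) E"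
  unfolding Kr_free_def
proof
  assume "\<exists>C. is_clique (neighbours U v) E C \<and> finite C \<and> card C = r"
  then obtain C where C: "is_clique (neighbours U v) E C" "finite C" "card C = r" by blast
  have "v \<notin> C" using C(1) no_loop by (auto simp: is_clique_def neighbours_def)
  moreover have "is_clique U E (insert v C)"
    using C(1) v edge_sym by (auto simp: is_clique_def neighbours_def)
  ultimately show False using free C(2,3) unfolding Kr_free_def
    by (metis card_insert_disjoint finite_insert)
qed

lemma num_independent_sets_delete_vertex:
  assumes fin: "finite U" and v: "v \<in> U"
  shows "num_independent_sets (U - {v}) E + num_independent_sets (non_neighbours U v) E
           \<le> num_independent_sets U E"
proof -
  let ?A = "{S. is_independent (U - {v}) E S}"
  let ?B = "{S. is_independent (non_neighbours U v) E S}"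
  have disjoint: "?A \<inter> insert v ` ?B = {}"
    by (auto simp: is_independent_def)
  have inj: "inj_on (insert v) ?B"
    by (rule inj_onI) (auto simp: is_independent_def non_neighbours_def insert_ident)
  have "insert v ` ?B \<subseteq> {S. is_independent U E S}"
    using v no_loop edge_sym by (auto simp: is_independent_def non_neighbours_def)
  then have subset: "?A \<union> insert v ` ?B \<subseteq> {S. is_independent U E S}"
    by (auto simp: is_independent_def)
  have "finite ?A" "finite ?B"
    using fin by (auto intro: finite_independent_sets simp: non_neighbours_def)
  then have "card ?A + card ?B = card (?A \<union> insert v ` ?B)"
    by (simp add: card_Un_disjoint[OF _ _ disjoint] card_image[OF inj])
  also have "\<dots> \<le> card {S. is_independent U E S}"
    by (rule card_mono[OF finite_independent_sets[OF fin] subset])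
  finally show ?thesis unfolding num_independent_sets_def .
qed

lemma num_independent_sets_non_neighbours:
  assumes "finite U" and "v \<in> U"
  shows "2 * num_independent_sets (non_neighbours U v) E \<le> num_independent_sets U E"
proof -
  have "num_independent_sets (non_neighbours U v) E \<le> num_independent_sets (U - {v}) E"
    using assms by (intro num_independent_sets_mono) (auto simp: non_neighbours_def)
  then show ?thesis using num_independent_sets_delete_vertex[OF assms] by simp
qed

lemma num_independent_sets_bounded_degree:
  assumes fin: "finite U" and "D \<ge> 1"
    and degree: "\<And>v. v \<in> U \<Longrightarrow> card (neighbours U v) < D"
  shows "W \<subseteq> U \<Longrightarrow> j * D \<le> card W \<Longrightarrow> 2 ^ j \<le> num_independent_sets W E"
proof (induction j arbitrary: W)
  case 0
  have "finite W" using fin "0.prems"(1) finite_subset by blast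
  then show ?case using num_independent_sets_pos[of W E] by simp
next
  case (Suc j)
  have finW: "finite W" using fin Suc.prems(1) finite_subset by blast
  have "D \<le> card W" using Suc.prems(2) by simp
  then obtain v where v: "v \<in> W" using \<open>D \<ge> 1\<close> by fastforce
  have "finite (neighbours U v)" using fin by (simp add: neighbours_def)
  then have "card (insert v (neighbours U v)) \<le> Suc (card (neighbours U v))"
    by (simp add: card_insert_if)
  also have "\<dots> \<le> D" using degree[of v] v Suc.prems(1) by auto
  finally have "card W - D \<le> card (W - insert v (neighbours U v))"
    using diff_card_le_card_Diff[of "insert v (neighbours U v)" W] \<open>finite (neighbours U v)\<close>
    by simp
  also have "W - insert v (neighbours U v) = non_neighbours W v"
    using Suc.prems(1) by (auto simp: non_neighbours_def neighbours_def)
  finally have "j * D \<le> card (non_neighbours W v)" using Suc.prems(2) by simp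
  then have "2 ^ j \<le> num_independent_sets (non_neighbours W v) E"
    using Suc.prems(1) by (intro Suc.IH) (auto simp: non_neighbours_def)
  then show ?case using num_independent_sets_non_neighbours[OF finW v] by simp
qed

lemma num_independent_sets_ge_exp:
  "finite U \<Longrightarrow> Kr_free (Suc m) U E \<Longrightarrow> t ^ m \<le> card U \<Longrightarrow> 2 ^ t \<le> num_independent_sets U E"
proof (induction m arbitrary: U)
  case 0
  then show ?case using Kr_free_1_imp_empty[of U E] by simp
next
  case (Suc m)
  show ?case
  proof (cases "\<exists>v\<in>U. t ^ m \<le> card (neighbours U v)")
    case True
    then obtain v where v: "v \<in> U" "t ^ m \<le> card (neighbours U v)" by blast
    have "2 ^ t \<le> num_independent_sets (neighbours U v) E"
      using Suc.prems(1) v Kr_free_neighbours[OF v(1) Suc.prems(2)]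
      by (intro Suc.IH) (auto simp: neighbours_def)
    also have "\<dots> \<le> num_independent_sets U E"
      using Suc.prems(1) by (intro num_independent_sets_mono) (auto simp: neighbours_def)
    finally show ?thesis .
  next
    case False
    show ?thesis
    proof (cases "t = 0")
      case True
      then show ?thesis using num_independent_sets_pos[OF Suc.prems(1), of E] by simp
    next
      case False
      then have "1 \<le> t ^ m" by simp
      moreover have "t * t ^ m \<le> card U" using Suc.prems(3) by simp
      ultimately show ?thesis
        using num_independent_sets_bounded_degree[OF Suc.prems(1), of "t ^ m" U t]
          \<open>\<not> (\<exists>v\<in>U. t ^ m \<le> card (neighbours U v))\<close> by (simp add: not_le)
    qed
  qed
qed

text \<open>If \<open>v\<close> has few non-neighbours, its neighbourhood \<open>N\<close> is large and contains no \<open>K\<^sub>r\<close>, and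
  a vertex \<open>u\<close> obtained inside \<open>N\<close> by induction has enough non-neighbours already within \<open>N\<close>.\<close>
lemma exists_vertex_many_non_neighbours:
  "finite U \<Longrightarrow> U \<noteq> {} \<Longrightarrow> Kr_free (Suc r) U E
     \<Longrightarrow> \<exists>v\<in>U. card U \<le> r * (card (non_neighbours U v) + 1)"
proof (induction r arbitrary: U)
  case 0
  then show ?case using Kr_free_1_imp_empty[of U E] by simp
next
  case (Suc r)
  obtain v where v: "v \<in> U" using Suc.prems(2) by blast
  define n where "n = card U"
  define b where "b = card (non_neighbours U v) + 1"
  show ?case
  proof (cases "n \<le> Suc r * b")
    case True
    then show ?thesis using v unfolding n_def b_def by blast
  next
    case False
    define N where "N = neighbours U v"
    have finN: "finite N" using Suc.prems(1) by (simp add: N_def neighbours_def)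
    have "U = insert v (non_neighbours U v \<union> N)" and "v \<notin> non_neighbours U v \<union> N"
      using v no_loop by (auto simp: N_def neighbours_def non_neighbours_def)
    moreover have "non_neighbours U v \<inter> N = {}"
      by (auto simp: N_def neighbours_def non_neighbours_def)
    ultimately have n_eq: "n = b + card N"
      using Suc.prems(1) finN unfolding n_def b_def
      by (metis card_Un_disjoint card_insert_disjoint finite_Un add.commute plus_1_eq_Suc
          add.assoc finite_insert)
    then have "N \<noteq> {}" using False by auto
    then obtain u where u: "u \<in> N" "card N \<le> r * (card (non_neighbours N u) + 1)"
      using Suc.IH[OF finN] Kr_free_neighbours[OF v Suc.prems(3)] unfolding N_def by blast
    define a where "a = card (non_neighbours U u) + 1"
    have "non_neighbours N u \<subseteq> non_neighbours U u"
      by (auto simp: N_def neighbours_def non_neighbours_def)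
    then have "card (non_neighbours N u) \<le> card (non_neighbours U u)"
      using Suc.prems(1) by (intro card_mono) (auto simp: non_neighbours_def)
    then have "card N \<le> r * a" using u(2) unfolding a_def
      by (meson add_le_mono1 le_trans mult_le_mono2)
    then have "n \<le> r * a + b" using n_eq by simp
    then have "Suc r * n \<le> Suc r * (r * a) + Suc r * b"
      by (metis add_mult_distrib2 mult_le_mono2)
    then have "r * n < r * (Suc r * a)" using False by (simp add: algebra_simps)
    then have "n \<le> Suc r * a" by simp
    moreover have "u \<in> U" using u(1) by (simp add: N_def neighbours_def)
    ultimately show ?thesis unfolding n_def a_def by blast
  qed
qed

lemma num_independent_sets_by_peeling:
  assumes large: "\<And>W. finite W \<Longrightarrow> Kr_free (Suc r) W E \<Longrightarrow> s \<le> card W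
                    \<Longrightarrow> c \<le> d * num_independent_sets W E"
  shows "finite U \<Longrightarrow> Kr_free (Suc r) U E \<Longrightarrow> r * (s + 1) + k \<le> card U
           \<Longrightarrow> k * c \<le> d * num_independent_sets U E"
proof (induction k arbitrary: U)
  case 0
  then show ?case by simp
next
  case (Suc k)
  have "U \<noteq> {}" using Suc.prems(3) by auto
  then obtain v where v: "v \<in> U" "card U \<le> r * (card (non_neighbours U v) + 1)"
    using exists_vertex_many_non_neighbours Suc.prems(1,2) by blast
  have "r * (s + 1) \<le> r * (card (non_neighbours U v) + 1)" using v(2) Suc.prems(3) by linarith
  then have "s \<le> card (non_neighbours U v)" using Suc.prems(3) v(2) by (cases "r = 0") auto
  then have "c \<le> d * num_independent_sets (non_neighbours U v) E"
    using Suc.prems(1,2) Kr_free_subset[of "non_neighbours U v" U]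
    by (intro large) (auto simp: non_neighbours_def)
  moreover have "k * c \<le> d * num_independent_sets (U - {v}) E"
    using Suc.prems v(1) Kr_free_subset[of "U - {v}" U] by (intro Suc.IH) auto
  ultimately have "Suc k * c \<le> d * (num_independent_sets (U - {v}) E
                                    + num_independent_sets (non_neighbours U v) E)"
    by (simp add: algebra_simps)
  also have "\<dots> \<le> d * num_independent_sets U E"
    using num_independent_sets_delete_vertex[OF Suc.prems(1) v(1)] by simp
  finally show ?case .
qed

lemma num_independent_sets_ge_triangular:
  "finite U \<Longrightarrow> Kr_free (Suc r) U E \<Longrightarrow> (4 * Suc r) ^ h \<le> card U
     \<Longrightarrow> (4 * Suc r) ^ (h * (h + 1) div 2) \<le> 2 ^ h * num_independent_sets U E"
proof (induction h arbitrary: U)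
  case 0
  then show ?case using num_independent_sets_pos[of U E] by simp
next
  case (Suc h)
  define T where "T = 4 * Suc r"
  have "2 * (r * (T ^ h + 1)) \<le> T * T ^ h"
  proof -
    have "2 * (r * (T ^ h + 1)) \<le> 4 * r * T ^ h"
      using mult_le_mono2[of 1 "T ^ h" "2 * r"] by (simp add: T_def algebra_simps)
    also have "\<dots> \<le> T * T ^ h" by (simp add: T_def)
    finally show ?thesis .
  qed
  \<comment> \<open>at least \<open>T^(h+1)/2\<close> vertices can be peeled before fewer than \<open>r (T^h + 1)\<close> remain\<close>
  define k where "k = T ^ Suc h - r * (T ^ h + 1)"
  have "k * T ^ (h * (h + 1) div 2) \<le> 2 ^ h * num_independent_sets U E"
  proof (rule num_independent_sets_by_peeling[where s = "T ^ h"])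
    show "\<And>W. finite W \<Longrightarrow> Kr_free (Suc r) W E \<Longrightarrow> T ^ h \<le> card W
            \<Longrightarrow> T ^ (h * (h + 1) div 2) \<le> 2 ^ h * num_independent_sets W E"
      using Suc.IH unfolding T_def .
    show "r * (T ^ h + 1) + k \<le> card U"
      using Suc.prems(3) \<open>2 * (r * (T ^ h + 1)) \<le> T * T ^ h\<close> by (simp add: k_def T_def)
  qed (simp_all add: Suc.prems(1,2))
  moreover have "T ^ Suc h \<le> 2 * k"
    using \<open>2 * (r * (T ^ h + 1)) \<le> T * T ^ h\<close> by (simp add: k_def)
  ultimately have "T ^ Suc h * T ^ (h * (h + 1) div 2) \<le> 2 * (k * T ^ (h * (h + 1) div 2))"
    and "2 * (k * T ^ (h * (h + 1) div 2)) \<le> 2 ^ Suc h * num_independent_sets U E"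
    by simp_all
  then have "T ^ Suc h * T ^ (h * (h + 1) div 2) \<le> 2 ^ Suc h * num_independent_sets U E"
    by (rule le_trans)
  moreover have "Suc h * (Suc h + 1) div 2 = Suc h + h * (h + 1) div 2" by simp
  ultimately show ?case by (simp add: T_def power_add)
qed

lemma log_num_independent_sets_ge_log_card:
  assumes "finite U" and "2 \<le> card U"
  shows "log 2 (card U) \<le> log 2 (num_independent_sets U E)"
  using card_le_num_independent_sets[OF assms(1)] assms(2) by simp

lemma log_num_independent_sets_ge_root:
  assumes fin: "finite U" and free: "Kr_free r U E" and "0 < r" and "2 \<le> card U"
  shows "card U powr (1 / r) / 2 \<le> log 2 (num_independent_sets U E)"
proof -
  define a where "a = card U powr (1 / r)"
  define t where "t = nat \<lfloor>a\<rfloor>"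
  obtain m where r: "r = Suc m" using \<open>0 < r\<close> gr0_implies_Suc by blast
  have "a \<ge> 0" by (simp add: a_def)
  then have "real t \<le> a" and "a < t + 1" by (simp_all add: t_def) linarith
  have "a ^ r = card U" using \<open>0 < r\<close> \<open>2 \<le> card U\<close> by (simp add: a_def powr_realpow[symmetric] powr_powr)
  then have "real (t ^ r) \<le> card U" using \<open>real t \<le> a\<close> by (metis of_nat_0_le_iff of_nat_power power_mono)
  then have "t ^ r \<le> card U" by (simp only: of_nat_le_iff)
  moreover have "t ^ m \<le> max 1 (t ^ r)"
  proof (cases "t = 0")
    case True
    then show ?thesis by (simp add: power_0_left)
  next
    case False
    then show ?thesis using power_increasing[of m r t] by (simp add: r)
  qed
  ultimately have "t ^ m \<le> card U" using \<open>2 \<le> card U\<close> by simp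
  then have "t \<le> log 2 (num_independent_sets U E)"
    using num_independent_sets_ge_exp[OF fin free[unfolded r]] le_log2_of_power by blast
  moreover have "1 \<le> log 2 (num_independent_sets U E)"
  proof -
    have "1 \<le> log 2 (card U)" using \<open>2 \<le> card U\<close> by simp
    then show ?thesis using log_num_independent_sets_ge_log_card[OF fin \<open>2 \<le> card U\<close>] by linarith
  qed
  ultimately show ?thesis using \<open>a < t + 1\<close> unfolding a_def[symmetric] by (cases "a < 2") auto
qed

lemma log_num_independent_sets_ge_log_squared:
  assumes fin: "finite U" and free: "Kr_free r U E" and "2 \<le> r" and "2 \<le> card U"
  shows "(log 2 (card U))\<^sup>2 / (18 * log 2 (2 * real r)) \<le> log 2 (num_independent_sets U E)"
proof -
  define T where "T = 4 * r"
  define l where "l = log 2 T"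
  define L where "L = log 2 (card U)"
  define h where "h = nat \<lfloor>L / l\<rfloor>"
  have "real T = 2 * (2 * real r)" by (simp add: T_def)
  then have "l = log 2 2 + log 2 (2 * real r)"
    unfolding l_def using \<open>2 \<le> r\<close> by (simp only: log_mult) simp
  then have "log 2 (2 * real r) = l - 1" by simp
  have "3 \<le> l"
    using \<open>2 \<le> r\<close> le_log_of_power[of 2 3 T] by (simp add: l_def T_def)
  have "0 \<le> L" using \<open>2 \<le> card U\<close> by (simp add: L_def)
  then have "h * l \<le> L" and "L < (real h + 1) * l"
    using \<open>3 \<le> l\<close> by (simp_all add: h_def pos_le_divide_eq[symmetric] pos_divide_less_eq[symmetric])
  have "0 < T" using \<open>2 \<le> r\<close> by (simp add: T_def)
  then have log_T_power: "log 2 (real T ^ k) = k * l" for k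
    by (simp add: l_def log_nat_power)
  have "log 2 (real T ^ h) \<le> log 2 (card U)"
    using \<open>h * l \<le> L\<close> log_T_power[of h] by (simp add: L_def)
  then have "real T ^ h \<le> card U"
    using \<open>0 < T\<close> \<open>2 \<le> card U\<close> by (subst (asm) log_le_cancel_iff) auto
  then have "T ^ h \<le> card U" by (simp only: of_nat_power[symmetric] of_nat_le_iff)
  moreover have "Suc (r - 1) = r" using \<open>2 \<le> r\<close> by simp
  ultimately have "T ^ (h * (h + 1) div 2) \<le> 2 ^ h * num_independent_sets U E"
    using num_independent_sets_ge_triangular[of U "r - 1" h] fin free by (simp only: T_def)
  then have "real T ^ (h * (h + 1) div 2) \<le> 2 ^ h * num_independent_sets U E"
    by (metis of_nat_le_iff of_nat_mult of_nat_power of_nat_numeral)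
  then have "log 2 (real T ^ (h * (h + 1) div 2)) \<le> log 2 (2 ^ h * num_independent_sets U E)"
    using \<open>0 < T\<close> num_independent_sets_pos[OF fin, of E] by simp
  moreover have "log 2 (real T ^ (h * (h + 1) div 2)) = real h * (real h + 1) * l / 2"
    by (simp add: log_T_power real_of_nat_div algebra_simps)
  moreover have "log 2 (2 ^ h * num_independent_sets U E) = h + log 2 (num_independent_sets U E)"
    using num_independent_sets_pos[OF fin, of E] by (simp add: log_mult log_nat_power)
  ultimately have log_num_ge: "real h * (real h + 1) * l / 2 - h \<le> log 2 (num_independent_sets U E)"
    by linarith
  show ?thesis
  proof (cases "h = 0")
    case True
    then have "L \<le> 18 * (l - 1)" using \<open>L < (real h + 1) * l\<close> \<open>3 \<le> l\<close> by simp
    then have "L\<^sup>2 / (18 * (l - 1)) \<le> L"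
      using \<open>0 \<le> L\<close> \<open>3 \<le> l\<close> by (simp add: pos_divide_le_eq power2_eq_square mult_left_mono)
    then show ?thesis
      using log_num_independent_sets_ge_log_card[OF fin \<open>2 \<le> card U\<close>]
      unfolding \<open>log 2 (2 * real r) = l - 1\<close> L_def by simp
  next
    case False
    then have "L\<^sup>2 / (18 * (l - 1)) \<le> real h * (real h + 1) * l / 2 - h"
      using \<open>3 \<le> l\<close> \<open>0 \<le> L\<close> \<open>L < (real h + 1) * l\<close> by (intro square_div_le_triangular) auto
    then show ?thesis
      using log_num_ge unfolding \<open>log 2 (2 * real r) = l - 1\<close> L_def by simp
  qed
qed

end

theorem mainTheorem3:
  fixes V :: "'a set" and E :: "'a \<Rightarrow> 'a \<Rightarrow> bool" and r x :: nat
  assumes "r \<ge> 2" and "x \<ge> 2"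
    and "simple_graph V E" and "card V = x" and "Kr_free r V E"
  shows "log 2 (real (num_independent_sets V E))
           \<ge> max (real x powr (1 / real r) / 2)
                  ((log 2 (real x))\<^sup>2 / (18 * log 2 (2 * real r)))"
proof -
  interpret undirected_graph E
    using \<open>simple_graph V E\<close> by unfold_locales (auto simp: simple_graph_def)
  have "finite V" using \<open>simple_graph V E\<close> by (simp add: simple_graph_def)
  then show ?thesis
    using log_num_independent_sets_ge_root[of V r] log_num_independent_sets_ge_log_squared[of V r]
      assms by simp
qed

end
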